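(* Let $\mathcal M_1=(X_1,\mathcal N_1,V_1)$ and $\mathcal M_2=(X_2,\mathcal N_2,V_2)$ be quasi-discrete neighbourhood models. (1) If $(Z_{\mathcal N},Z_1,Z_2)$ is a path preserving bisimulation between $\mathcal M_1$ and $\mathcal M_2$, then $Z_{\mathcal N}$ is a modal bisimulation with converse. (2) If $\rho\subseteq X_1\times X_2$ is a non-empty modal bisimulation with converse, then there exist relations $Z_1,Z_2$ such that $(\rho,Z_1,Z_2)$ is a path preserving bisimulation between $\mathcal M_1$ and $\mathcal M_2$.
   Context: A neighbourhood space $(X,\mathcal N)$ assigns to each $x\in X$ a filter $\mathcal N(x)$ on $X$ (closed under finite intersections and supersets, not containing $\emptyset$) such that $x\in N$ for all $N\in\mathcal N(x)$. It is quasi-discrete if each $x$ has a minimal neighbourhood $N_{\min}(x)\in\mathcal N(x)$ contained in every element of $\mathcal N(x)$. A quasi-discrete neighbourhood model $(X,\mathcal N,V)$ has a quasi-discrete space, index space $\mathbb N$ with usual order, least element $0$ and $N_{\min}(n)=\{n,n+1\}$, and a valuation $V:X\to\mathcal P(\mathsf P)$ for a countable set $\mathsf P$ of atoms. A path is a continuous map $p:\mathbb N\to X$, equivalently $p(n+1)\in N_{\min}(p(n))$ for all $n$. Induced edge relation: $R=\{(x,y)\mid y\in N_{\min}(x)\}$. Modal bisimulation with converse: $\rho\subseteq X_1\times X_2$ such that for every pair $x_1\rho x_2$: $V_1(x_1)=V_2(x_2)$; if $(x_1,y_1)\in R_1$ then there is $y_2$ with $(x_2,y_2)\in R_2$ and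 $y_1\rho y_2$; if $(x_2,y_2)\in R_2$ then there is $y_1$ with $(x_1,y_1)\in R_1$ and $y_1\rho y_2$; if $(y_1,x_1)\in R_1$ then there is $y_2$ with $(y_2,x_2)\in R_2$ and $y_1\rho y_2$; if $(y_2,x_2)\in R_2$ then there is $y_1$ with $(y_1,x_1)\in R_1$ and $y_1\rho y_2$. Path preserving bisimulation: with path sets $\mathcal P_1,\mathcal P_2$ and index set $I=\mathbb N$, a triple $(Z_{\mathcal N},Z_1,Z_2)$, $\emptyset\ne Z_{\mathcal N}\subseteq X_1\times X_2$, $Z_1\subseteq(\mathcal P_1\times I)\times(\mathcal P_2\times I)$, $Z_2\subseteq(\mathcal P_2\times I)\times(\mathcal P_1\times I)$, such that: (1) at each pair $x_1Z_{\mathcal N}x_2$: $V_1(x_1)=V_2(x_2)$; for every $N_2\in\mathcal N_2(x_2)$ there is $N_1\in\mathcal N_1(x_1)$ with every $y_1\in N_1$ related to some $y_2\in N_2$; and for every $N_1\in\mathcal N_1(x_1)$ there is $N_2\in\mathcal N_2(x_2)$ with every $y_2\in N_2$ related to some $y_1\in N_1$; (2) if $x_1Z_{\mathcal N}x_2$, $p(0)=x_1$, $n\ne0$, there are $q$ with $q(0)=x_2$ and $m$ with $p(n)Z_{\mathcal N}q(m)$, $(p,n)Z_1(q,m)$; (3) if $x_1Z_{\mathcal N}x_2$, $p(n)=x_1$, $n\ne0$, there are $q,m$ with $q(m)=x_2$, $p(0)Z_{\mathcal N}q(0)$, $(p,n)Z_1(q,m)$; (4) if $(p,n)Z_1(q,m)$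 and $0<k_q<m$, there is $0<k_p<n$ with $p(k_p)Z_{\mathcal N}q(k_q)$; (5) if $x_1Z_{\mathcal N}x_2$, $q(0)=x_2$, $m\ne0$, there are $p$ with $p(0)=x_1$ and $n$ with $p(n)Z_{\mathcal N}q(m)$, $(q,m)Z_2(p,n)$; (6) if $x_1Z_{\mathcal N}x_2$, $q(m)=x_2$, $m\neq0$, there are $p,n$ with $p(n)=x_1$, $p(0)Z_{\mathcal N}q(0)$, $(q,m)Z_2(p,n)$; (7) if $(q,m)Z_2(p,n)$ and $0<k_p<n$, there is $0<k_q<m$ with $p(k_p)Z_{\mathcal N}q(k_q)$. *)

theory Defs
  imports Main "HOL-Library.Countable"
begin

definition nbhd_space :: "'a set \<Rightarrow> ('a \<Rightarrow> 'a set set) \<Rightarrow> bool" where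
  "nbhd_space X N \<longleftrightarrow>
     (\<forall>x\<in>X. X \<in> N x \<and> {} \<notin> N x
        \<and> (\<forall>S\<in>N x. S \<subseteq> X \<and> x \<in> S)
        \<and> (\<forall>S\<in>N x. \<forall>T\<in>N x. S \<inter> T \<in> N x)
        \<and> (\<forall>S\<in>N x. \<forall>T. S \<subseteq> T \<and> T \<subseteq> X \<longrightarrow> T \<in> N x))"

definition quasi_discrete :: "'a set \<Rightarrow> ('a \<Rightarrow> 'a set set) \<Rightarrow> bool" where
  "quasi_discrete X N \<longleftrightarrow> nbhd_space X N \<and> (\<forall>x\<in>X. \<exists>M\<in>N x. \<forall>S\<in>N x. M \<subseteq> S)"

definition Nmin :: "('a \<Rightarrow> 'a set set) \<Rightarrow> 'a \<Rightarrow> 'a set" where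
  "Nmin N x = (THE M. M \<in> N x \<and> (\<forall>S\<in>N x. M \<subseteq> S))"

definition qd_model :: "'a set \<Rightarrow> ('a \<Rightarrow> 'a set set) \<Rightarrow> ('a \<Rightarrow> 'p::countable set) \<Rightarrow> bool" where
  "qd_model X N V \<longleftrightarrow> quasi_discrete X N"

text \<open>Index space: naturals with minimal neighbourhood {n, n+1}.\<close>
definition nat_nbhd :: "nat \<Rightarrow> nat set set" where
  "nat_nbhd n = {S. {n, Suc n} \<subseteq> S}"

text \<open>Paths: continuous maps from the index space into (X, N).\<close>
definition is_path :: "'a set \<Rightarrow> ('a \<Rightarrow> 'a set set) \<Rightarrow> (nat \<Rightarrow> 'a) \<Rightarrow> bool" where
  "is_path X N p \<longleftrightarrow> (\<forall>n. p n \<in> X \<and> (\<forall>S\<in>N (p n). {k. p k \<in> S} \<in> nat_nbhd n))"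

definition paths :: "'a set \<Rightarrow> ('a \<Rightarrow> 'a set set) \<Rightarrow> (nat \<Rightarrow> 'a) set" where
  "paths X N = {p. is_path X N p}"

definition edges :: "'a set \<Rightarrow> ('a \<Rightarrow> 'a set set) \<Rightarrow> ('a \<times> 'a) set" where
  "edges X N = {(x, y). x \<in> X \<and> y \<in> Nmin N x}"

definition modal_bisim_conv ::
  "'a set \<Rightarrow> ('a \<Rightarrow> 'a set set) \<Rightarrow> ('a \<Rightarrow> 'p set) \<Rightarrow>
   'b set \<Rightarrow> ('b \<Rightarrow> 'b set set) \<Rightarrow> ('b \<Rightarrow> 'p set) \<Rightarrow> ('a \<times> 'b) set \<Rightarrow> bool" where
  "modal_bisim_conv X1 N1 V1 X2 N2 V2 \<rho> \<longleftrightarrow>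
     \<rho> \<subseteq> X1 \<times> X2 \<and>
     (\<forall>(x1, x2)\<in>\<rho>.
        V1 x1 = V2 x2
      \<and> (\<forall>y1. (x1, y1) \<in> edges X1 N1 \<longrightarrow> (\<exists>y2. (x2, y2) \<in> edges X2 N2 \<and> (y1, y2) \<in> \<rho>))
      \<and> (\<forall>y2. (x2, y2) \<in> edges X2 N2 \<longrightarrow> (\<exists>y1. (x1, y1) \<in> edges X1 N1 \<and> (y1, y2) \<in> \<rho>))
      \<and> (\<forall>y1. (y1, x1) \<in> edges X1 N1 \<longrightarrow> (\<exists>y2. (y2, x2) \<in> edges X2 N2 \<and> (y1, y2) \<in> \<rho>))
      \<and> (\<forall>y2. (y2, x2) \<in> edges X2 N2 \<longrightarrow> (\<exists>y1. (y1, x1) \<in> edges X1 N1 \<and> (y1, y2) \<in> \<rho>)))"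

definition path_pres_bisim ::
  "'a set \<Rightarrow> ('a \<Rightarrow> 'a set set) \<Rightarrow> ('a \<Rightarrow> 'p set) \<Rightarrow>
   'b set \<Rightarrow> ('b \<Rightarrow> 'b set set) \<Rightarrow> ('b \<Rightarrow> 'p set) \<Rightarrow>
   ('a \<times> 'b) set \<Rightarrow> (((nat \<Rightarrow> 'a) \<times> nat) \<times> ((nat \<Rightarrow> 'b) \<times> nat)) set \<Rightarrow>
   (((nat \<Rightarrow> 'b) \<times> nat) \<times> ((nat \<Rightarrow> 'a) \<times> nat)) set \<Rightarrow> bool" where
  "path_pres_bisim X1 N1 V1 X2 N2 V2 ZN Z1 Z2 \<longleftrightarrow>
     ZN \<noteq> {} \<and> ZN \<subseteq> X1 \<times> X2
   \<and> Z1 \<subseteq> (paths X1 N1 \<times> UNIV) \<times> (paths X2 N2 \<times> UNIV)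
   \<and> Z2 \<subseteq> (paths X2 N2 \<times> UNIV) \<times> (paths X1 N1 \<times> UNIV)
   \<comment> \<open>(1)\<close>
   \<and> (\<forall>(x1, x2)\<in>ZN.
        V1 x1 = V2 x2
      \<and> (\<forall>S2\<in>N2 x2. \<exists>S1\<in>N1 x1. \<forall>y1\<in>S1. \<exists>y2\<in>S2. (y1, y2) \<in> ZN)
      \<and> (\<forall>S1\<in>N1 x1. \<exists>S2\<in>N2 x2. \<forall>y2\<in>S2. \<exists>y1\<in>S1. (y1, y2) \<in> ZN))
   \<comment> \<open>(2)\<close>
   \<and> (\<forall>(x1, x2)\<in>ZN. \<forall>p\<in>paths X1 N1. \<forall>n. p 0 = x1 \<and> n \<noteq> 0 \<longrightarrow>
        (\<exists>q\<in>paths X2 N2. \<exists>m. q 0 = x2 \<and> (p n, q m) \<in> ZN \<and> ((p, n), (q, m)) \<in> Z1))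
   \<comment> \<open>(3)\<close>
   \<and> (\<forall>(x1, x2)\<in>ZN. \<forall>p\<in>paths X1 N1. \<forall>n. p n = x1 \<and> n \<noteq> 0 \<longrightarrow>
        (\<exists>q\<in>paths X2 N2. \<exists>m. q m = x2 \<and> (p 0, q 0) \<in> ZN \<and> ((p, n), (q, m)) \<in> Z1))
   \<comment> \<open>(4)\<close>
   \<and> (\<forall>p n q m. ((p, n), (q, m)) \<in> Z1 \<longrightarrow>
        (\<forall>kq. 0 < kq \<and> kq < m \<longrightarrow> (\<exists>kp. 0 < kp \<and> kp < n \<and> (p kp, q kq) \<in> ZN)))
   \<comment> \<open>(5)\<close>
   \<and> (\<forall>(x1, x2)\<in>ZN. \<forall>q\<in>paths X2 N2. \<forall>m. q 0 = x2 \<and> m \<noteq> 0 \<longrightarrow>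
        (\<exists>p\<in>paths X1 N1. \<exists>n. p 0 = x1 \<and> (p n, q m) \<in> ZN \<and> ((q, m), (p, n)) \<in> Z2))
   \<comment> \<open>(6)\<close>
   \<and> (\<forall>(x1, x2)\<in>ZN. \<forall>q\<in>paths X2 N2. \<forall>m. q m = x2 \<and> m \<noteq> 0 \<longrightarrow>
        (\<exists>p\<in>paths X1 N1. \<exists>n. p n = x1 \<and> (p 0, q 0) \<in> ZN \<and> ((q, m), (p, n)) \<in> Z2))
   \<comment> \<open>(7)\<close>
   \<and> (\<forall>q m p n. ((q, m), (p, n)) \<in> Z2 \<longrightarrow>
        (\<forall>kp. 0 < kp \<and> kp < n \<longrightarrow> (\<exists>kq. 0 < kq \<and> kq < m \<and> (p kp, q kq) \<in> ZN)))"

end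

theory Submission
  imports Defs
begin

text \<open>In a quasi-discrete space the whole neighbourhood filter of x is generated by its
  minimal neighbourhood, i.e. by the edges leaving x, and paths are exactly the sequences
  moving along edges. Hence the neighbourhood clause of a path preserving bisimulation says
  the same as the forward edge clause of a modal bisimulation, and paths from or to a
  related point can be lifted step by step along a modal bisimulation. The backward
  edge clauses follow from the path clauses applied to the path that makes one step and
  then stays put: clause (4) forces the matching path to reach its target in at most one
  step. Everything is symmetric, so it suffices to treat one half of each notion.\<close>

lemma Nmin_least_nbhd:
  assumes "quasi_discrete X N" "x \<in> X"
  shows "Nmin N x \<in> N x \<and> (\<forall>S\<in>N x. Nmin N x \<subseteq> S)"
proof -
  from assms obtain M where "M \<in> N x" "\<forall>S\<in>N x. M \<subseteq> S"
    unfolding quasi_discrete_def by blast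
  then have "\<exists>!M. M \<in> N x \<and> (\<forall>S\<in>N x. M \<subseteq> S)"
    by (intro ex1I[of _ M]) auto
  then show ?thesis
    unfolding Nmin_def by (rule theI')
qed

lemma Nmin_in_nbhd:
  assumes "quasi_discrete X N" "x \<in> X"
  shows "Nmin N x \<in> N x"
  using Nmin_least_nbhd[OF assms] by (rule conjunct1)

lemma Nmin_subset_nbhd:
  assumes "quasi_discrete X N" "x \<in> X" "S \<in> N x"
  shows "Nmin N x \<subseteq> S"
  using Nmin_least_nbhd[OF assms(1,2)] assms(3) by blast

lemma mem_nbhd_self:
  assumes "quasi_discrete X N" "x \<in> X" "S \<in> N x"
  shows "x \<in> S"
  using assms unfolding quasi_discrete_def nbhd_space_def by blast

lemma edges_refl:
  assumes "quasi_discrete X N" "x \<in> X"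
  shows "(x, x) \<in> edges X N"
  using assms(2) mem_nbhd_self[OF assms Nmin_in_nbhd[OF assms]] unfolding edges_def by simp

lemma paths_iff_edges:
  assumes "quasi_discrete X N"
  shows "p \<in> paths X N \<longleftrightarrow> (\<forall>k. (p k, p (Suc k)) \<in> edges X N)"
proof
  assume p: "p \<in> paths X N"
  show "\<forall>k. (p k, p (Suc k)) \<in> edges X N"
  proof
    fix k
    have X: "p k \<in> X" using p unfolding paths_def is_path_def by blast
    then have "{j. p j \<in> Nmin N (p k)} \<in> nat_nbhd k"
      using p Nmin_in_nbhd[OF assms X] unfolding paths_def is_path_def by auto
    then show "(p k, p (Suc k)) \<in> edges X N"
      using X unfolding nat_nbhd_def edges_def by auto
  qed
next
  assume e: "\<forall>k. (p k, p (Suc k)) \<in> edges X N"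
  show "p \<in> paths X N"
    unfolding paths_def is_path_def
  proof (intro CollectI allI conjI ballI)
    fix n
    have X: "p n \<in> X" and step: "p (Suc n) \<in> Nmin N (p n)"
      using e unfolding edges_def by auto
    show "p n \<in> X" by (rule X)
    fix S assume S: "S \<in> N (p n)"
    have "p n \<in> S" using mem_nbhd_self[OF assms X S] .
    moreover have "p (Suc n) \<in> S" using Nmin_subset_nbhd[OF assms X S] step by blast
    ultimately show "{k. p k \<in> S} \<in> nat_nbhd n" unfolding nat_nbhd_def by auto
  qed
qed

lemma step_then_stay_in_paths:
  assumes "quasi_discrete X N" "(y, x) \<in> edges X N" "x \<in> X"
  shows "(\<lambda>k. if k = 0 then y else x) \<in> paths X N"
  using assms edges_refl[OF assms(1,3)] by (simp add: paths_iff_edges[OF assms(1)])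

definition forth :: "('a \<times> 'a) set \<Rightarrow> ('b \<times> 'b) set \<Rightarrow> ('a \<times> 'b) set \<Rightarrow> bool" where
  "forth E1 E2 R \<longleftrightarrow>
     (\<forall>x1 x2 y1. (x1, x2) \<in> R \<and> (x1, y1) \<in> E1 \<longrightarrow> (\<exists>y2. (x2, y2) \<in> E2 \<and> (y1, y2) \<in> R))"

lemma Nmin_forth_iff_nbhd:
  assumes "quasi_discrete X1 N1" "quasi_discrete X2 N2" "x1 \<in> X1" "x2 \<in> X2"
  shows "(\<forall>y1\<in>Nmin N1 x1. \<exists>y2\<in>Nmin N2 x2. (y1, y2) \<in> R) \<longleftrightarrow>
    (\<forall>S2\<in>N2 x2. \<exists>S1\<in>N1 x1. \<forall>y1\<in>S1. \<exists>y2\<in>S2. (y1, y2) \<in> R)"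
proof
  assume forth: "\<forall>y1\<in>Nmin N1 x1. \<exists>y2\<in>Nmin N2 x2. (y1, y2) \<in> R"
  show "\<forall>S2\<in>N2 x2. \<exists>S1\<in>N1 x1. \<forall>y1\<in>S1. \<exists>y2\<in>S2. (y1, y2) \<in> R"
  proof (intro ballI bexI[of _ "Nmin N1 x1"])
    fix S2 y1 assume "S2 \<in> N2 x2" "y1 \<in> Nmin N1 x1"
    with forth Nmin_subset_nbhd[OF assms(2,4)] show "\<exists>y2\<in>S2. (y1, y2) \<in> R" by blast
  qed (rule Nmin_in_nbhd[OF assms(1,3)])
next
  assume "\<forall>S2\<in>N2 x2. \<exists>S1\<in>N1 x1. \<forall>y1\<in>S1. \<exists>y2\<in>S2. (y1, y2) \<in> R"
  then obtain S1 where "S1 \<in> N1 x1" "\<forall>y1\<in>S1. \<exists>y2\<in>Nmin N2 x2. (y1, y2) \<in> R"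
    using Nmin_in_nbhd[OF assms(2,4)] by blast
  with Nmin_subset_nbhd[OF assms(1,3)] show "\<forall>y1\<in>Nmin N1 x1. \<exists>y2\<in>Nmin N2 x2. (y1, y2) \<in> R"
    by blast
qed

lemma forth_edges_iff_Nmin:
  assumes "R \<subseteq> X1 \<times> X2"
  shows "forth (edges X1 N1) (edges X2 N2) R \<longleftrightarrow>
    (\<forall>(x1, x2)\<in>R. \<forall>y1\<in>Nmin N1 x1. \<exists>y2\<in>Nmin N2 x2. (y1, y2) \<in> R)"
  using assms unfolding forth_def edges_def by blast

lemma forth_edges_iff_nbhd:
  assumes "quasi_discrete X1 N1" "quasi_discrete X2 N2" "R \<subseteq> X1 \<times> X2"
  shows "forth (edges X1 N1) (edges X2 N2) R \<longleftrightarrow>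
    (\<forall>(x1, x2)\<in>R. \<forall>S2\<in>N2 x2. \<exists>S1\<in>N1 x1. \<forall>y1\<in>S1. \<exists>y2\<in>S2. (y1, y2) \<in> R)"
proof -
  have "(\<forall>y1\<in>Nmin N1 x1. \<exists>y2\<in>Nmin N2 x2. (y1, y2) \<in> R) \<longleftrightarrow>
      (\<forall>S2\<in>N2 x2. \<exists>S1\<in>N1 x1. \<forall>y1\<in>S1. \<exists>y2\<in>S2. (y1, y2) \<in> R)" if "(x1, x2) \<in> R" for x1 x2
    using that assms(3) by (intro Nmin_forth_iff_nbhd[OF assms(1,2)]) auto
  then show ?thesis
    unfolding forth_edges_iff_Nmin[OF assms(3)] Ball_def by simp
qed

lemma lift_chain_forward:
  assumes "forth E1 E2 R" "\<forall>k. (p k, p (Suc k)) \<in> E1" "(p 0, y) \<in> R"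
  shows "\<exists>q. q 0 = y \<and> (\<forall>k. (q k, q (Suc k)) \<in> E2) \<and> (\<forall>k. (p k, q k) \<in> R)"
proof -
  have "\<exists>q. \<forall>k. ((p k, q k) \<in> R \<and> (k = 0 \<longrightarrow> q k = y)) \<and> (q k, q (Suc k)) \<in> E2"
  proof (rule dependent_nat_choice)
    fix z k assume "(p k, z) \<in> R \<and> (k = 0 \<longrightarrow> z = y)"
    then show "\<exists>z'. ((p (Suc k), z') \<in> R \<and> (Suc k = 0 \<longrightarrow> z' = y)) \<and> (z, z') \<in> E2"
      using assms(1,2) unfolding forth_def by blast
  qed (use assms(3) in blast)
  then show ?thesis by blast
qed

lemma lift_chain_backward:
  assumes "forth (E1\<inverse>) (E2\<inverse>) R" "\<forall>k<n. (p k, p (Suc k)) \<in> E1" "(p n, y) \<in> R"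
  shows "\<exists>q. q n = y \<and> (\<forall>k<n. (q k, q (Suc k)) \<in> E2) \<and> (\<forall>k\<le>n. (p k, q k) \<in> R)"
  using assms(2,3)
proof (induction n arbitrary: y)
  case 0
  then show ?case by (intro exI[of _ "\<lambda>_. y"]) simp
next
  case (Suc n)
  obtain y' where "(y', y) \<in> E2" "(p n, y') \<in> R"
    using assms(1) Suc.prems unfolding forth_def by blast
  moreover have "\<forall>k<n. (p k, p (Suc k)) \<in> E1"
    using Suc.prems(1) by simp
  ultimately obtain q where "q n = y'" "\<forall>k<n. (q k, q (Suc k)) \<in> E2" "\<forall>k\<le>n. (p k, q k) \<in> R"
    using Suc.IH by blast
  with \<open>(y', y) \<in> E2\<close> Suc.prems(2) show ?case
    by (intro exI[of _ "q(Suc n := y)"]) (auto simp: le_Suc_eq less_Suc_eq)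
qed

lemma lift_chain:
  assumes "forth E1 E2 R" "forth (E1\<inverse>) (E2\<inverse>) R"
    and "\<forall>k. (p k, p (Suc k)) \<in> E1" "(p n, y) \<in> R"
  shows "\<exists>q. q n = y \<and> (\<forall>k. (q k, q (Suc k)) \<in> E2) \<and> (\<forall>k. (p k, q k) \<in> R)"
proof -
  obtain qf where qf: "qf 0 = y" "\<forall>k. (qf k, qf (Suc k)) \<in> E2" "\<forall>k. (p (n + k), qf k) \<in> R"
    using lift_chain_forward[OF assms(1), of "\<lambda>k. p (n + k)"] assms(3,4) by simp blast
  obtain qb where qb: "qb n = y" "\<forall>k<n. (qb k, qb (Suc k)) \<in> E2" "\<forall>k\<le>n. (p k, qb k) \<in> R"
    using lift_chain_backward[OF assms(2)] assms(3,4) by blast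
  define q where "q k = (if k < n then qb k else qf (k - n))" for k
  have "(q k, q (Suc k)) \<in> E2" for k
  proof -
    consider "Suc k < n" | "Suc k = n" | "n \<le> k" by linarith
    then show ?thesis
    proof cases
      case 1 then show ?thesis using qb(2) by (simp add: q_def)
    next
      case 2 then show ?thesis using qb(1,2) qf(1) by (auto simp: q_def)
    next
      case 3 then show ?thesis using qf(2) by (simp add: q_def Suc_diff_le)
    qed
  qed
  moreover have "(p k, q k) \<in> R" for k
  proof (cases "k < n")
    case False
    then show ?thesis using qf(3) by (metis q_def le_add_diff_inverse not_less)
  qed (use qb(3) in \<open>simp add: q_def\<close>)
  moreover have "q n = y"
    using qf(1) by (simp add: q_def)
  ultimately show ?thesis by blast
qed

definition modal_sim_conv ::
  "'a set \<Rightarrow> ('a \<Rightarrow> 'a set set) \<Rightarrow> ('a \<Rightarrow> 'p set) \<Rightarrow>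
   'b set \<Rightarrow> ('b \<Rightarrow> 'b set set) \<Rightarrow> ('b \<Rightarrow> 'p set) \<Rightarrow> ('a \<times> 'b) set \<Rightarrow> bool" where
  "modal_sim_conv X1 N1 V1 X2 N2 V2 \<rho> \<longleftrightarrow>
     \<rho> \<subseteq> X1 \<times> X2 \<and> (\<forall>(x1, x2)\<in>\<rho>. V1 x1 = V2 x2)
   \<and> forth (edges X1 N1) (edges X2 N2) \<rho> \<and> forth ((edges X1 N1)\<inverse>) ((edges X2 N2)\<inverse>) \<rho>"

definition path_pres_sim ::
  "'a set \<Rightarrow> ('a \<Rightarrow> 'a set set) \<Rightarrow> ('a \<Rightarrow> 'p set) \<Rightarrow>
   'b set \<Rightarrow> ('b \<Rightarrow> 'b set set) \<Rightarrow> ('b \<Rightarrow> 'p set) \<Rightarrow>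
   ('a \<times> 'b) set \<Rightarrow> (((nat \<Rightarrow> 'a) \<times> nat) \<times> ((nat \<Rightarrow> 'b) \<times> nat)) set \<Rightarrow> bool" where
  "path_pres_sim X1 N1 V1 X2 N2 V2 ZN Z1 \<longleftrightarrow>
     ZN \<subseteq> X1 \<times> X2
   \<and> Z1 \<subseteq> (paths X1 N1 \<times> UNIV) \<times> (paths X2 N2 \<times> UNIV)
   \<and> (\<forall>(x1, x2)\<in>ZN.
        V1 x1 = V2 x2
      \<and> (\<forall>S2\<in>N2 x2. \<exists>S1\<in>N1 x1. \<forall>y1\<in>S1. \<exists>y2\<in>S2. (y1, y2) \<in> ZN))
   \<and> (\<forall>(x1, x2)\<in>ZN. \<forall>p\<in>paths X1 N1. \<forall>n. p 0 = x1 \<and> n \<noteq> 0 \<longrightarrow>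
        (\<exists>q\<in>paths X2 N2. \<exists>m. q 0 = x2 \<and> (p n, q m) \<in> ZN \<and> ((p, n), (q, m)) \<in> Z1))
   \<and> (\<forall>(x1, x2)\<in>ZN. \<forall>p\<in>paths X1 N1. \<forall>n. p n = x1 \<and> n \<noteq> 0 \<longrightarrow>
        (\<exists>q\<in>paths X2 N2. \<exists>m. q m = x2 \<and> (p 0, q 0) \<in> ZN \<and> ((p, n), (q, m)) \<in> Z1))
   \<and> (\<forall>p n q m. ((p, n), (q, m)) \<in> Z1 \<longrightarrow>
        (\<forall>kq. 0 < kq \<and> kq < m \<longrightarrow> (\<exists>kp. 0 < kp \<and> kp < n \<and> (p kp, q kq) \<in> ZN)))"

lemma modal_bisim_conv_iff_sims:
  "modal_bisim_conv X1 N1 V1 X2 N2 V2 \<rho> \<longleftrightarrow>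
     modal_sim_conv X1 N1 V1 X2 N2 V2 \<rho> \<and> modal_sim_conv X2 N2 V2 X1 N1 V1 (\<rho>\<inverse>)"
  unfolding modal_bisim_conv_def modal_sim_conv_def forth_def by auto

lemma ball_prod_conj_distrib:
  "(\<forall>(x, y)\<in>R. P x y \<and> Q x y) \<longleftrightarrow> (\<forall>(x, y)\<in>R. P x y) \<and> (\<forall>(x, y)\<in>R. Q x y)"
  by blast

lemma ball_prod_converse:
  "(\<forall>(y, x)\<in>R\<inverse>. P y x) \<longleftrightarrow> (\<forall>(x, y)\<in>R. P y x)"
  by auto

lemma converse_subset_Times_iff:
  "R\<inverse> \<subseteq> B \<times> A \<longleftrightarrow> R \<subseteq> A \<times> B"
  by auto

lemma path_pres_bisim_iff_sims:
  "path_pres_bisim X1 N1 V1 X2 N2 V2 ZN Z1 Z2 \<longleftrightarrow>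
     ZN \<noteq> {} \<and> path_pres_sim X1 N1 V1 X2 N2 V2 ZN Z1
   \<and> path_pres_sim X2 N2 V2 X1 N1 V1 (ZN\<inverse>) Z2"
  unfolding path_pres_bisim_def path_pres_sim_def ball_prod_converse converse_iff
    converse_subset_Times_iff ball_prod_conj_distrib eq_commute[of "V2 x" "V1 y" for x y]
  by (rule iffI; elim conjE; intro conjI; assumption)

lemma path_pres_sim_back_edge:
  assumes q1: "quasi_discrete X1 N1" and q2: "quasi_discrete X2 N2"
    and sim: "path_pres_sim X1 N1 V1 X2 N2 V2 ZN Z1"
    and r: "(x1, x2) \<in> ZN" and e: "(y1, x1) \<in> edges X1 N1"
  shows "\<exists>y2. (y2, x2) \<in> edges X2 N2 \<and> (y1, y2) \<in> ZN"
proof -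
  have "ZN \<subseteq> X1 \<times> X2"
    using sim unfolding path_pres_sim_def by (elim conjE) assumption
  then have X1: "x1 \<in> X1" and X2: "x2 \<in> X2" using r by auto
  have ends_at: "\<forall>(x1, x2)\<in>ZN. \<forall>p\<in>paths X1 N1. \<forall>n. p n = x1 \<and> n \<noteq> 0 \<longrightarrow>
      (\<exists>q\<in>paths X2 N2. \<exists>m. q m = x2 \<and> (p 0, q 0) \<in> ZN \<and> ((p, n), (q, m)) \<in> Z1)"
    using sim unfolding path_pres_sim_def by (elim conjE) assumption
  have bound: "\<forall>p n q m. ((p, n), (q, m)) \<in> Z1 \<longrightarrow>
      (\<forall>kq. 0 < kq \<and> kq < m \<longrightarrow> (\<exists>kp. 0 < kp \<and> kp < n \<and> (p kp, q kq) \<in> ZN))"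
    using sim unfolding path_pres_sim_def by (elim conjE) assumption
  define p where "p = (\<lambda>k::nat. if k = 0 then y1 else x1)"
  have "p \<in> paths X1 N1"
    unfolding p_def using step_then_stay_in_paths[OF q1 e X1] .
  moreover have "p 1 = x1" by (simp add: p_def)
  ultimately obtain q m where q: "q \<in> paths X2 N2" "q m = x2" "(p 0, q 0) \<in> ZN" "((p, 1), (q, m)) \<in> Z1"
    using ends_at r by fastforce
  have "m \<le> 1"
  proof (rule ccontr)
    assume "\<not> m \<le> 1"
    with bound[rule_format, OF q(4), of 1] obtain kp :: nat where "0 < kp" "kp < 1"
      by auto
    then show False by simp
  qed
  then have "(q 0, x2) \<in> edges X2 N2"
    using q(1,2) edges_refl[OF q2 X2] paths_iff_edges[OF q2] by (cases m) auto
  then show ?thesis using q(3) by (auto simp: p_def)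
qed

lemma modal_sim_conv_if_path_pres_sim:
  assumes q1: "quasi_discrete X1 N1" and q2: "quasi_discrete X2 N2"
    and sim: "path_pres_sim X1 N1 V1 X2 N2 V2 ZN Z1"
  shows "modal_sim_conv X1 N1 V1 X2 N2 V2 ZN"
proof -
  have sub: "ZN \<subseteq> X1 \<times> X2"
    using sim unfolding path_pres_sim_def by (elim conjE) assumption
  have V_nbhd: "\<forall>(x1, x2)\<in>ZN. V1 x1 = V2 x2
      \<and> (\<forall>S2\<in>N2 x2. \<exists>S1\<in>N1 x1. \<forall>y1\<in>S1. \<exists>y2\<in>S2. (y1, y2) \<in> ZN)"
    using sim unfolding path_pres_sim_def by (elim conjE) assumption
  have "forth ((edges X1 N1)\<inverse>) ((edges X2 N2)\<inverse>) ZN"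
    using path_pres_sim_back_edge[OF q1 q2 sim] unfolding forth_def by auto
  moreover have "forth (edges X1 N1) (edges X2 N2) ZN"
    using V_nbhd forth_edges_iff_nbhd[OF q1 q2 sub] by auto
  moreover have "\<forall>(x1, x2)\<in>ZN. V1 x1 = V2 x2"
    using V_nbhd by auto
  ultimately show ?thesis
    using sub unfolding modal_sim_conv_def by blast
qed

lemma lift_path:
  assumes q1: "quasi_discrete X1 N1" and q2: "quasi_discrete X2 N2"
    and sim: "modal_sim_conv X1 N1 V1 X2 N2 V2 \<rho>"
    and p: "p \<in> paths X1 N1" and r: "(p n, y) \<in> \<rho>"
  shows "\<exists>q\<in>paths X2 N2. q n = y \<and> (\<forall>k. (p k, q k) \<in> \<rho>)"
proof -
  have fwd: "forth (edges X1 N1) (edges X2 N2) \<rho>"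
    and bwd: "forth ((edges X1 N1)\<inverse>) ((edges X2 N2)\<inverse>) \<rho>"
    using sim unfolding modal_sim_conv_def by blast+
  have "\<forall>k. (p k, p (Suc k)) \<in> edges X1 N1" using p paths_iff_edges[OF q1] by blast
  then obtain q where q: "q n = y" "\<forall>k. (q k, q (Suc k)) \<in> edges X2 N2" "\<forall>k. (p k, q k) \<in> \<rho>"
    using lift_chain[OF fwd bwd, of p n y] r by blast
  then have "q \<in> paths X2 N2" using paths_iff_edges[OF q2] by blast
  with q show ?thesis by blast
qed

definition lockstep_paths ::
  "'a set \<Rightarrow> ('a \<Rightarrow> 'a set set) \<Rightarrow> 'b set \<Rightarrow> ('b \<Rightarrow> 'b set set) \<Rightarrow> ('a \<times> 'b) set \<Rightarrow>
   (((nat \<Rightarrow> 'a) \<times> nat) \<times> ((nat \<Rightarrow> 'b) \<times> nat)) set" where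
  "lockstep_paths X1 N1 X2 N2 \<rho> =
     {((p, n), (q, m)). p \<in> paths X1 N1 \<and> q \<in> paths X2 N2 \<and> n = m \<and> (\<forall>k. (p k, q k) \<in> \<rho>)}"

lemma path_pres_sim_lockstep_paths:
  assumes q1: "quasi_discrete X1 N1" and q2: "quasi_discrete X2 N2"
    and sim: "modal_sim_conv X1 N1 V1 X2 N2 V2 \<rho>"
  shows "path_pres_sim X1 N1 V1 X2 N2 V2 \<rho> (lockstep_paths X1 N1 X2 N2 \<rho>)"
proof -
  let ?L = "lockstep_paths X1 N1 X2 N2 \<rho>"
  have sub: "\<rho> \<subseteq> X1 \<times> X2" and V: "\<forall>(x1, x2)\<in>\<rho>. V1 x1 = V2 x2"
    and fwd: "forth (edges X1 N1) (edges X2 N2) \<rho>"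
    using sim unfolding modal_sim_conv_def by blast+
  have lift: "\<exists>q\<in>paths X2 N2. q n = y \<and> (p 0, q 0) \<in> \<rho> \<and> (p n', q n') \<in> \<rho> \<and> ((p, n'), (q, n')) \<in> ?L"
    if "p \<in> paths X1 N1" "(p n, y) \<in> \<rho>" for p n n' y
    using lift_path[OF q1 q2 sim that] that(1) unfolding lockstep_paths_def by blast
  have start: "\<exists>q\<in>paths X2 N2. \<exists>m. q 0 = x2 \<and> (p n, q m) \<in> \<rho> \<and> ((p, n), (q, m)) \<in> ?L"
    if "p \<in> paths X1 N1" "(p 0, x2) \<in> \<rho>" for p n x2
    using lift[OF that, of n] by blast
  have finish: "\<exists>q\<in>paths X2 N2. \<exists>m. q m = x2 \<and> (p 0, q 0) \<in> \<rho> \<and> ((p, n), (q, m)) \<in> ?L"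
    if "p \<in> paths X1 N1" "(p n, x2) \<in> \<rho>" for p n x2
    using lift[OF that, of n] by blast
  show ?thesis
    unfolding path_pres_sim_def
  proof (intro conjI)
    show "\<rho> \<subseteq> X1 \<times> X2" by (rule sub)
    show "?L \<subseteq> (paths X1 N1 \<times> UNIV) \<times> (paths X2 N2 \<times> UNIV)"
      unfolding lockstep_paths_def by blast
    show "\<forall>(x1, x2)\<in>\<rho>. V1 x1 = V2 x2
        \<and> (\<forall>S2\<in>N2 x2. \<exists>S1\<in>N1 x1. \<forall>y1\<in>S1. \<exists>y2\<in>S2. (y1, y2) \<in> \<rho>)"
      unfolding ball_prod_conj_distrib forth_edges_iff_nbhd[OF q1 q2 sub, symmetric]
      using V fwd by blast
    show "\<forall>(x1, x2)\<in>\<rho>. \<forall>p\<in>paths X1 N1. \<forall>n. p 0 = x1 \<and> n \<noteq> 0 \<longrightarrow>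
        (\<exists>q\<in>paths X2 N2. \<exists>m. q 0 = x2 \<and> (p n, q m) \<in> \<rho> \<and> ((p, n), (q, m)) \<in> ?L)"
      using start by auto
    show "\<forall>(x1, x2)\<in>\<rho>. \<forall>p\<in>paths X1 N1. \<forall>n. p n = x1 \<and> n \<noteq> 0 \<longrightarrow>
        (\<exists>q\<in>paths X2 N2. \<exists>m. q m = x2 \<and> (p 0, q 0) \<in> \<rho> \<and> ((p, n), (q, m)) \<in> ?L)"
      using finish by auto
    show "\<forall>p n q m. ((p, n), (q, m)) \<in> ?L \<longrightarrow>
        (\<forall>kq. 0 < kq \<and> kq < m \<longrightarrow> (\<exists>kp. 0 < kp \<and> kp < n \<and> (p kp, q kq) \<in> \<rho>))"
      unfolding lockstep_paths_def by blast
  qed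
qed

theorem lemma28:
  fixes X1 :: "'a set" and N1 :: "'a \<Rightarrow> 'a set set" and V1 :: "'a \<Rightarrow> 'p::countable set"
    and X2 :: "'b set" and N2 :: "'b \<Rightarrow> 'b set set" and V2 :: "'b \<Rightarrow> 'p set"
  assumes "qd_model X1 N1 V1" and "qd_model X2 N2 V2"
  shows "(\<forall>ZN Z1 Z2. path_pres_bisim X1 N1 V1 X2 N2 V2 ZN Z1 Z2
            \<longrightarrow> modal_bisim_conv X1 N1 V1 X2 N2 V2 ZN)
       \<and> (\<forall>\<rho>. \<rho> \<noteq> {} \<and> modal_bisim_conv X1 N1 V1 X2 N2 V2 \<rho>
            \<longrightarrow> (\<exists>Z1 Z2. path_pres_bisim X1 N1 V1 X2 N2 V2 \<rho> Z1 Z2))"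
proof -
  have q1: "quasi_discrete X1 N1" and q2: "quasi_discrete X2 N2"
    using assms unfolding qd_model_def by blast+
  have "modal_bisim_conv X1 N1 V1 X2 N2 V2 ZN" if "path_pres_bisim X1 N1 V1 X2 N2 V2 ZN Z1 Z2"
    for ZN Z1 Z2
    using that unfolding path_pres_bisim_iff_sims modal_bisim_conv_iff_sims
    by (blast intro: modal_sim_conv_if_path_pres_sim[OF q1 q2] modal_sim_conv_if_path_pres_sim[OF q2 q1])
  moreover have "path_pres_bisim X1 N1 V1 X2 N2 V2 \<rho>
      (lockstep_paths X1 N1 X2 N2 \<rho>) (lockstep_paths X2 N2 X1 N1 (\<rho>\<inverse>))"
    if "\<rho> \<noteq> {}" "modal_bisim_conv X1 N1 V1 X2 N2 V2 \<rho>" for \<rho>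
    using that unfolding path_pres_bisim_iff_sims modal_bisim_conv_iff_sims
    by (blast intro: path_pres_sim_lockstep_paths[OF q1 q2] path_pres_sim_lockstep_paths[OF q2 q1])
  ultimately show ?thesis by blast
qed

end
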